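(* Let $G$ be a graph, $k\ge1$, and $S,T$ independent sets of $G$ of size $k$. Let $\mathcal{F}$ be a family of independent sets of $G$, each of size at least $k$, with $S,T\in\mathcal{F}$. Let $\mathcal{G}$ be the graph with vertex set $\mathcal{F}$ in which distinct $I,I'\in\mathcal{F}$ are adjacent iff $|I\cap I'|\ge k-1$. If there is a path from $S$ to $T$ in $\mathcal{G}$, then there is a token jumping reconfiguration sequence from $S$ to $T$ in $G$.
   Context: A token jumping reconfiguration sequence from $S$ to $T$ is a finite sequence $S=I_0,\dots,I_m=T$ of independent sets of $G$ of size $k$ with each $I_{j+1}=(I_j\setminus\{u\})\cup\{v\}$ for some $u\in I_j$, $v\in V(G)\setminus I_j$. In the paper, $\mathcal{F}$ is obtained from an independence covering family for $(G,k)$ by deleting the members of size less than $k$ and adding $S$ and $T$. *)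

theory Defs
  imports Main
begin

definition graph :: "'a set \<Rightarrow> ('a \<Rightarrow> 'a \<Rightarrow> bool) \<Rightarrow> bool" where
  "graph V E \<longleftrightarrow> finite V \<and> (\<forall>u v. E u v \<longrightarrow> u \<in> V \<and> v \<in> V)
     \<and> (\<forall>u v. E u v \<longrightarrow> E v u) \<and> (\<forall>v. \<not> E v v)"

definition indep_set :: "'a set \<Rightarrow> ('a \<Rightarrow> 'a \<Rightarrow> bool) \<Rightarrow> 'a set \<Rightarrow> bool" where
  "indep_set V E I \<longleftrightarrow> I \<subseteq> V \<and> (\<forall>u\<in>I. \<forall>v\<in>I. \<not> E u v)"

definition tj_step :: "'a set \<Rightarrow> 'a set \<Rightarrow> 'a set \<Rightarrow> bool" where
  "tj_step V I J \<longleftrightarrow> (\<exists>u\<in>I. \<exists>v\<in>V - I. J = (I - {u}) \<union> {v})"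

definition tj_sequence ::
  "'a set \<Rightarrow> ('a \<Rightarrow> 'a \<Rightarrow> bool) \<Rightarrow> nat \<Rightarrow> 'a set list \<Rightarrow> 'a set \<Rightarrow> 'a set \<Rightarrow> bool" where
  "tj_sequence V E k Is S T \<longleftrightarrow> Is \<noteq> [] \<and> hd Is = S \<and> last Is = T
     \<and> (\<forall>I\<in>set Is. indep_set V E I \<and> card I = k)
     \<and> (\<forall>j. Suc j < length Is \<longrightarrow> tj_step V (Is ! j) (Is ! Suc j))"

definition fam_adj :: "nat \<Rightarrow> 'a set \<Rightarrow> 'a set \<Rightarrow> bool" where
  "fam_adj k I J \<longleftrightarrow> I \<noteq> J \<and> card (I \<inter> J) \<ge> k - 1"

definition fam_path :: "'a set set \<Rightarrow> nat \<Rightarrow> 'a set list \<Rightarrow> 'a set \<Rightarrow> 'a set \<Rightarrow> bool" where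
  "fam_path F k Ps S T \<longleftrightarrow> Ps \<noteq> [] \<and> hd Ps = S \<and> last Ps = T \<and> set Ps \<subseteq> F
     \<and> (\<forall>j. Suc j < length Ps \<longrightarrow> fam_adj k (Ps ! j) (Ps ! Suc j))"

end

theory Submission
  imports Defs
begin

text \<open>Along the path I_0 = S, ..., I_m = T we keep a size-k subset A_j of I_j that is
  reachable from S by token jumping.  Any two size-k subsets of one independent set are
  connected by exchanging one token at a time.  To pass from I_j to I_(j+1), pick a common
  (k-1)-set C; completing C by a vertex of I_j resp. I_(j+1) gives two size-k sets differing
  in one token.  Finally, the only size-k subset of T is T itself.\<close>

definition tj_move :: "'a set \<Rightarrow> ('a \<Rightarrow> 'a \<Rightarrow> bool) \<Rightarrow> nat \<Rightarrow> 'a set \<Rightarrow> 'a set \<Rightarrow> bool" where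
  "tj_move V E k B C \<longleftrightarrow>
     indep_set V E B \<and> card B = k \<and> indep_set V E C \<and> card C = k \<and> tj_step V B C"

lemma indep_set_subset: "indep_set V E I \<Longrightarrow> A \<subseteq> I \<Longrightarrow> indep_set V E A"
  unfolding indep_set_def by blast

lemma finite_if_indep_set: "finite V \<Longrightarrow> indep_set V E I \<Longrightarrow> finite I"
  unfolding indep_set_def by (blast intro: finite_subset)

lemma tj_sequence_single: "indep_set V E S \<Longrightarrow> card S = k \<Longrightarrow> tj_sequence V E k [S] S S"
  by (simp add: tj_sequence_def)

lemma tj_sequence_snoc:
  assumes "tj_sequence V E k Is S B" and "tj_move V E k B C"
  shows "tj_sequence V E k (Is @ [C]) S C"
proof -
  have "Is \<noteq> []" and last: "Is ! (length Is - 1) = B"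
    using assms(1) by (auto simp: tj_sequence_def last_conv_nth)
  have "tj_step V ((Is @ [C]) ! j) ((Is @ [C]) ! Suc j)" if "Suc j < length (Is @ [C])" for j
  proof (cases "Suc j < length Is")
    case True
    then show ?thesis using assms(1) by (simp add: nth_append tj_sequence_def)
  next
    case False
    then have "j = length Is - 1" using that by simp
    then show ?thesis using assms(2) last \<open>Is \<noteq> []\<close> by (auto simp: nth_append tj_move_def)
  qed
  then show ?thesis using assms by (auto simp: tj_sequence_def tj_move_def)
qed

lemma tj_sequence_if_rtranclp_tj_move:
  assumes "(tj_move V E k)\<^sup>*\<^sup>* S T" and "indep_set V E S" and "card S = k"
  shows "\<exists>Is. tj_sequence V E k Is S T"
  using assms(1)
proof (induction rule: rtranclp_induct)
  case base
  then show ?case using assms(2,3) tj_sequence_single by blast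
next
  case step
  then show ?case using tj_sequence_snoc by blast
qed

lemma tj_move_exchange:
  assumes "indep_set V E (insert x C)" "indep_set V E (insert y C)"
    and "card (insert x C) = k" "card (insert y C) = k"
    and "x \<notin> C" "y \<notin> insert x C"
  shows "tj_move V E k (insert x C) (insert y C)"
proof -
  have "insert y C = (insert x C - {x}) \<union> {y}" using assms(5) by auto
  moreover have "y \<in> V" using assms(2) by (simp add: indep_set_def)
  ultimately show ?thesis using assms unfolding tj_move_def tj_step_def by blast
qed

lemma rtranclp_tj_move_within_indep_set:
  assumes "indep_set V E I" "finite I"
    and "A \<subseteq> I" "B \<subseteq> I" "card A = k" "card B = k"
  shows "(tj_move V E k)\<^sup>*\<^sup>* A B"
  using assms(3-)
proof (induction "card (A - B)" arbitrary: A)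
  case 0
  have "finite A" "finite B" using 0 assms(2) finite_subset by auto
  then have "A \<subseteq> B" using 0 by simp
  then have "A = B" using card_subset_eq[OF \<open>finite B\<close>] 0 by simp
  then show ?case by simp
next
  case (Suc n)
  have fin: "finite A" "finite B" using Suc assms(2) finite_subset by auto
  have "A - B \<noteq> {}" using Suc.hyps(2) by (metis card.empty nat.distinct(1))
  then obtain a where a: "a \<in> A" "a \<notin> B" by auto
  have "\<not> B \<subseteq> A" using card_subset_eq[OF fin(1)] Suc.prems(3,4) a by auto
  then obtain b where b: "b \<in> B" "b \<notin> A" by auto
  define C where "C = A - {a}"
  have A: "A = insert a C" and "b \<notin> C" using a b by (auto simp: C_def)
  have "card A > 0" using fin(1) a card_gt_0_iff by blast
  then have card_bC: "card (insert b C) = k"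
    using fin a b Suc.prems(3) by (simp add: C_def card_insert_if)
  have sub_bC: "insert b C \<subseteq> I" using Suc.prems(1,2) b by (auto simp: C_def)
  have "insert b C - B = (A - B) - {a}" using a b by (auto simp: C_def)
  then have "card (insert b C - B) = n" using Suc.hyps(2) a fin by simp
  then have "(tj_move V E k)\<^sup>*\<^sup>* (insert b C) B"
    using Suc.hyps(1) sub_bC Suc.prems(2,4) card_bC by blast
  moreover have "tj_move V E k (insert a C) (insert b C)"
  proof (rule tj_move_exchange)
    show "indep_set V E (insert a C)" using indep_set_subset[OF assms(1) Suc.prems(1)] A by simp
    show "indep_set V E (insert b C)" using indep_set_subset[OF assms(1) sub_bC] .
    show "card (insert a C) = k" using Suc.prems(3) A by simp
    show "card (insert b C) = k" by (fact card_bC)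
    show "a \<notin> C" by (simp add: C_def)
    show "b \<notin> insert a C" using A b(2) by simp
  qed
  ultimately show ?case using A by (meson converse_rtranclp_into_rtranclp)
qed

lemma rtranclp_tj_move_across_overlap:
  assumes "indep_set V E I" "indep_set V E J" "finite I" "finite J"
    and "k \<le> card I" "k \<le> card J" "k - 1 \<le> card (I \<inter> J)" "1 \<le> k"
    and "A \<subseteq> I" "card A = k"
  shows "\<exists>B \<subseteq> J. card B = k \<and> (tj_move V E k)\<^sup>*\<^sup>* A B"
proof -
  obtain C where C: "C \<subseteq> I \<inter> J" "card C = k - 1" "finite C"
    using obtain_subset_with_card_n[OF assms(7)] by blast
  have "\<not> I \<subseteq> C" using C assms(3,5,8) card_mono[of C I] by auto
  then obtain x where x: "x \<in> I" "x \<notin> C" by auto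
  have "\<not> J \<subseteq> C" using C assms(4,6,8) card_mono[of C J] by auto
  then obtain y where y: "y \<in> J" "y \<notin> C" by auto
  have card_x: "card (insert x C) = k" and card_y: "card (insert y C) = k"
    using x y C assms(8) by auto
  have sub_x: "insert x C \<subseteq> I" and sub_y: "insert y C \<subseteq> J" using x y C by auto
  have "(tj_move V E k)\<^sup>*\<^sup>* A (insert x C)"
    using rtranclp_tj_move_within_indep_set[OF assms(1,3,9) sub_x assms(10) card_x] .
  moreover have "(tj_move V E k)\<^sup>*\<^sup>* (insert x C) (insert y C)"
  proof (cases "x = y")
    case False
    have "tj_move V E k (insert x C) (insert y C)"
      using tj_move_exchange[OF indep_set_subset[OF assms(1) sub_x] indep_set_subset[OF assms(2) sub_y]
          card_x card_y x(2)] y(2) False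
      by simp
    then show ?thesis by blast
  qed simp
  ultimately have "(tj_move V E k)\<^sup>*\<^sup>* A (insert y C)" by (rule rtranclp_trans)
  with sub_y card_y show ?thesis by blast
qed

lemma rtranclp_tj_move_along_fam_path:
  assumes "fam_path F k Ps S T" and "\<forall>I\<in>F. indep_set V E I \<and> k \<le> card I"
    and "finite V" "1 \<le> k" "card S = k" "j < length Ps"
  shows "\<exists>A \<subseteq> Ps ! j. card A = k \<and> (tj_move V E k)\<^sup>*\<^sup>* S A"
  using assms(6)
proof (induction j)
  case 0
  then have "Ps ! 0 = S" using assms(1) by (auto simp: fam_path_def hd_conv_nth)
  then show ?case using assms(5) by auto
next
  case (Suc j)
  then obtain A where A: "A \<subseteq> Ps ! j" "card A = k" "(tj_move V E k)\<^sup>*\<^sup>* S A" by auto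
  have "Ps ! j \<in> F" "Ps ! Suc j \<in> F" using assms(1) Suc.prems by (auto simp: fam_path_def)
  then have "indep_set V E (Ps ! j)" "indep_set V E (Ps ! Suc j)"
    and "k \<le> card (Ps ! j)" "k \<le> card (Ps ! Suc j)"
    using assms(2) by auto
  moreover from this(1,2) have "finite (Ps ! j)" "finite (Ps ! Suc j)"
    using finite_if_indep_set[OF assms(3)] by auto
  moreover have "k - 1 \<le> card (Ps ! j \<inter> Ps ! Suc j)"
    using assms(1) Suc.prems by (auto simp: fam_path_def fam_adj_def)
  ultimately obtain B where B: "B \<subseteq> Ps ! Suc j" "card B = k" "(tj_move V E k)\<^sup>*\<^sup>* A B"
    using rtranclp_tj_move_across_overlap[OF _ _ _ _ _ _ _ assms(4) A(1,2)] by blast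
  have "(tj_move V E k)\<^sup>*\<^sup>* S B" using A(3) B(3) by (rule rtranclp_trans)
  with B(1,2) show ?case by blast
qed

theorem lemma7p1:
  fixes V :: "'a set" and E :: "'a \<Rightarrow> 'a \<Rightarrow> bool" and k :: nat
    and S T :: "'a set" and F :: "'a set set"
  assumes "graph V E" and "k \<ge> 1"
    and "indep_set V E S" and "card S = k"
    and "indep_set V E T" and "card T = k"
    and "\<forall>I\<in>F. indep_set V E I \<and> card I \<ge> k"
    and "S \<in> F" and "T \<in> F"
    and "\<exists>Ps. fam_path F k Ps S T"
  shows "\<exists>Is. tj_sequence V E k Is S T"
proof -
  obtain Ps where path: "fam_path F k Ps S T" using assms(10) by blast
  have "finite V" using assms(1) by (simp add: graph_def)
  have "Ps \<noteq> []" and "Ps ! (length Ps - 1) = T"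
    using path by (auto simp: fam_path_def last_conv_nth)
  then obtain A where A: "A \<subseteq> T" "card A = k" "(tj_move V E k)\<^sup>*\<^sup>* S A"
    using rtranclp_tj_move_along_fam_path[OF path assms(7) \<open>finite V\<close> assms(2,4)]
    by (metis diff_less length_greater_0_conv zero_less_one)
  have "finite T" using finite_if_indep_set[OF \<open>finite V\<close> assms(5)] .
  then have "A = T" using A assms(6) card_subset_eq by metis
  then show ?thesis using tj_sequence_if_rtranclp_tj_move A(3) assms(3,4) by blast
qed

end
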